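(* Let $E_0>0$ and let $\phi$ satisfy the standing assumptions below with $n\le 3$. Define, for $V\in(0,E_0)$, $\kappa(V)=\frac{\varrho+p}{\varrho+3p}\cdot\frac{\varrho'(V)}{p'(V)}$ and $I(V)=\frac15\kappa^2+2\kappa+(\varrho+p)\frac{\kappa'(V)}{p'(V)}$ (i.e. $I=\frac15\kappa^2+2\kappa+(\varrho+p)\frac{d\kappa}{dp}$ with $\frac{d\varrho}{dp}=\varrho'/p'$, $\frac{d\kappa}{dp}=\kappa'/p'$). Then $I(V)\to-\infty$ as $V\to E_0^-$; in particular there is $V_0<E_0$ such that $I(V)\le0$ for all $V\in[V_0,E_0)$, i.e. $I\le 0$ for all $0<p\le p_0:=p(V_0)$.
   Context: Standing assumptions on $\phi:(-\infty,1]\to\mathbb R_+$: $\phi(x)=0$ for $x<0$, $\phi$ analytic on $[0,1]$, and there is $n\in\{0,1,2,\dots\}$ with $\phi'(0)=\dots=\phi^{(n-1)}(0)=0$, $\phi^{(n)}(0)>0$. For $V\in(0,E_0]$: $\varrho(V)=\frac{4\pi}{V^3}\int_V^{E_0}\phi(1-E/E_0)E^2\sqrt{(E/V)^2-1}\,dE$ and $p(V)=\frac{4\pi}{3V}\int_V^{E_0}\phi(1-E/E_0)[(E/V)^2-1]^{3/2}dE$; primes denote derivatives in $V$. *)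

theory Defs
  imports "HOL-Analysis.Analysis"
begin

definition real_analytic_on :: "(real \<Rightarrow> real) \<Rightarrow> real set \<Rightarrow> bool" where
  "real_analytic_on f S \<longleftrightarrow>
     (\<forall>x\<in>S. \<exists>r>0. \<exists>a::nat \<Rightarrow> real.
        \<forall>y. \<bar>y - x\<bar> < r \<longrightarrow> (\<lambda>k. a k * (y - x) ^ k) sums f y)"

text \<open>Standing assumptions on phi with vanishing order n at 0. Analyticity on the closed
  interval [0,1] means that phi agrees on [0,1] with a function psi that is real analytic on an
  open set containing [0,1]; the derivatives of phi at 0 (one-sided) are those of psi.\<close>
definition admissible_phi :: "(real \<Rightarrow> real) \<Rightarrow> nat \<Rightarrow> bool" where
  "admissible_phi phi n \<longleftrightarrow>
     (\<forall>x\<le>1. phi x \<ge> 0) \<and> (\<forall>x<0. phi x = 0) \<and>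
     (\<exists>psi S. open S \<and> {0..1} \<subseteq> S \<and> real_analytic_on psi S \<and>
        (\<forall>x\<in>{0..1}. phi x = psi x) \<and>
        (\<forall>k<n. (deriv ^^ k) psi 0 = 0) \<and> (deriv ^^ n) psi 0 > 0)"

definition rho :: "(real \<Rightarrow> real) \<Rightarrow> real \<Rightarrow> real \<Rightarrow> real" where
  "rho phi E0 V = 4 * pi / V ^ 3 *
     integral {V..E0} (\<lambda>E. phi (1 - E / E0) * E ^ 2 * sqrt ((E / V) ^ 2 - 1))"

definition pres :: "(real \<Rightarrow> real) \<Rightarrow> real \<Rightarrow> real \<Rightarrow> real" where
  "pres phi E0 V = 4 * pi / (3 * V) *
     integral {V..E0} (\<lambda>E. phi (1 - E / E0) * ((E / V) ^ 2 - 1) powr (3 / 2))"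

definition kappa :: "(real \<Rightarrow> real) \<Rightarrow> real \<Rightarrow> real \<Rightarrow> real" where
  "kappa phi E0 V =
     (rho phi E0 V + pres phi E0 V) / (rho phi E0 V + 3 * pres phi E0 V) *
     (deriv (rho phi E0) V / deriv (pres phi E0) V)"

definition Iind :: "(real \<Rightarrow> real) \<Rightarrow> real \<Rightarrow> real \<Rightarrow> real" where
  "Iind phi E0 V = (1 / 5) * (kappa phi E0 V) ^ 2 + 2 * kappa phi E0 V +
     (rho phi E0 V + pres phi E0 V) * (deriv (kappa phi E0) V / deriv (pres phi E0) V)"

end

theory Submission
  imports Defs
begin

text \<open>Write \<open>V = E\<^sub>0 - h\<close> and \<open>\<phi> x = x\<^sup>n \<chi> x\<close> near 0 with \<open>\<chi>(0) > 0\<close>. The substitution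
  \<open>E = E\<^sub>0 - h u\<close> turns \<open>\<rho>\<close> and \<open>p\<close> into \<open>h\<^sup>a R(h)\<close> and \<open>h\<^sup>a\<^sup>+\<^sup>1 P(h)\<close> with \<open>a = n + 3/2\<close>,
  where \<open>R\<close> and \<open>P\<close> are integrals over \<open>[0, 1]\<close> of kernels that are smooth in \<open>h\<close>, so they are
  \<open>C\<^sup>2\<close> near \<open>h = 0\<close> with \<open>R(0), P(0) > 0\<close>. Since \<open>\<kappa>\<close> and \<open>I\<close> involve only ratios of
  \<open>V\<close>-derivatives, \<open>h\<^sup>2 I(E\<^sub>0 - h)\<close> is a continuous expression in \<open>h\<close>, \<open>R, P\<close> and
  \<open>h R', h\<^sup>2 R'', h P', h\<^sup>2 P''\<close>, whose value at \<open>h = 0\<close> is \<open>a R(0)\<^sup>2 (a/5 - 1) / ((a + 1) P(0))\<^sup>2\<close>.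
  This is negative because \<open>n \<le> 3\<close> gives \<open>a < 5\<close>, hence \<open>I \<rightarrow> -\<infinity>\<close>.\<close>

section \<open>Power series\<close>

definition C2_on :: "real set \<Rightarrow> (real \<Rightarrow> real) \<Rightarrow> (real \<Rightarrow> real) \<Rightarrow> (real \<Rightarrow> real) \<Rightarrow> bool" where
  "C2_on S f f1 f2 \<longleftrightarrow>
     (\<forall>x\<in>S. (f has_real_derivative f1 x) (at x) \<and> (f1 has_real_derivative f2 x) (at x)) \<and>
     continuous_on S f2"

lemma C2_on_subset: "C2_on S f f1 f2 \<Longrightarrow> T \<subseteq> S \<Longrightarrow> C2_on T f f1 f2"
  unfolding C2_on_def by (auto intro: continuous_on_subset)

lemma C2_on_imp_continuous_on: "C2_on S f f1 f2 \<Longrightarrow> continuous_on S f \<and> continuous_on S f1"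
  unfolding C2_on_def by (auto intro!: continuous_at_imp_continuous_on DERIV_isCont)

lemma funpow_diffs: "(diffs ^^ k) (a :: nat \<Rightarrow> real) i = fact (i + k) / fact i * a (i + k)"
proof (induction k arbitrary: i)
  case (Suc k)
  have "(diffs ^^ Suc k) a i = of_nat (Suc i) * (diffs ^^ k) a (Suc i)"
    by (simp add: diffs_def)
  also have "\<dots> = of_nat (Suc i) * (fact (Suc i + k) / fact (Suc i) * a (Suc i + k))"
    using Suc by simp
  also have "\<dots> = fact (i + Suc k) / fact i * a (i + Suc k)"
    unfolding fact_Suc[of i] by (simp del: fact_Suc of_nat_Suc)
  finally show ?case .
qed simp

lemma summable_funpow_diffs:
  fixes a :: "nat \<Rightarrow> real"
  assumes "\<And>y. \<bar>y\<bar> < r \<Longrightarrow> summable (\<lambda>i. a i * y ^ i)" "\<bar>x\<bar> < r"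
  shows "summable (\<lambda>i. (diffs ^^ k) a i * x ^ i)"
  using assms(2)
proof (induction k arbitrary: x)
  case (Suc k)
  then show ?case using termdiff_converges[of x r "(diffs ^^ k) a"] by auto
qed (use assms(1) in simp)

lemma powser_funpow_diffs_has_derivative:
  fixes a :: "nat \<Rightarrow> real"
  assumes "\<And>y. \<bar>y\<bar> < r \<Longrightarrow> summable (\<lambda>i. a i * y ^ i)" "\<bar>x\<bar> < r"
  shows "((\<lambda>y. \<Sum>i. (diffs ^^ k) a i * y ^ i) has_real_derivative
           (\<Sum>i. (diffs ^^ Suc k) a i * x ^ i)) (at x)"
  using termdiffs_strong'[of r "(diffs ^^ k) a" x] summable_funpow_diffs[OF assms(1)] assms(2)
  by auto

lemma powser_C2_on:
  fixes a :: "nat \<Rightarrow> real"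
  assumes "\<And>y. \<bar>y\<bar> < r \<Longrightarrow> summable (\<lambda>i. a i * y ^ i)"
  shows "C2_on {-r<..<r} (\<lambda>y. \<Sum>i. a i * y ^ i) (\<lambda>y. \<Sum>i. diffs a i * y ^ i)
           (\<lambda>y. \<Sum>i. diffs (diffs a) i * y ^ i)"
proof -
  have d: "((\<lambda>y. \<Sum>i. (diffs ^^ k) a i * y ^ i) has_real_derivative
             (\<Sum>i. (diffs ^^ Suc k) a i * x ^ i)) (at x)" if "x \<in> {-r<..<r}" for k x
    by (rule powser_funpow_diffs_has_derivative[OF assms]) (use that in auto)
  have "continuous_on {-r<..<r} (\<lambda>y. \<Sum>i. (diffs ^^ 2) a i * y ^ i)"
  proof (intro continuous_at_imp_continuous_on ballI)
    fix x :: real assume "x \<in> {-r<..<r}"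
    from d[OF this, of 2] show "isCont (\<lambda>y. \<Sum>i. (diffs ^^ 2) a i * y ^ i) x"
      by (rule DERIV_isCont)
  qed
  then show ?thesis
    unfolding C2_on_def using d[of _ 0] d[of _ 1] by (simp add: numeral_2_eq_2)
qed

lemma deriv_funpow_powser:
  fixes a :: "nat \<Rightarrow> real"
  assumes "\<And>y. \<bar>y\<bar> < r \<Longrightarrow> (\<lambda>i. a i * y ^ i) sums f y" "\<bar>x\<bar> < r"
  shows "(deriv ^^ k) f x = (\<Sum>i. (diffs ^^ k) a i * x ^ i)"
  using assms(2)
proof (induction k arbitrary: x)
  case 0
  then show ?case using assms(1) sums_unique by fastforce
next
  case (Suc k)
  have sm: "\<And>y. \<bar>y\<bar> < r \<Longrightarrow> summable (\<lambda>i. a i * y ^ i)"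
    using assms(1) sums_summable by blast
  have "((deriv ^^ k) f has_real_derivative (\<Sum>i. (diffs ^^ Suc k) a i * x ^ i)) (at x)"
  proof (rule has_field_derivative_transform_within_open[where S = "{-r<..<r}"])
    show "((\<lambda>y. \<Sum>i. (diffs ^^ k) a i * y ^ i) has_real_derivative
            (\<Sum>i. (diffs ^^ Suc k) a i * x ^ i)) (at x)"
      by (rule powser_funpow_diffs_has_derivative[OF sm Suc.prems])
  qed (use Suc in auto)
  then show ?case by (simp add: DERIV_imp_deriv)
qed

lemma powser_factor_power:
  fixes a :: "nat \<Rightarrow> real"
  assumes sums: "\<And>y. \<bar>y\<bar> < r \<Longrightarrow> (\<lambda>k. a k * y ^ k) sums f y" and zero: "\<And>k. k < n \<Longrightarrow> a k = 0"
    and "\<bar>y\<bar> < r"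
  shows "summable (\<lambda>i. a (i + n) * y ^ i)" and "f y = y ^ n * (\<Sum>i. a (i + n) * y ^ i)"
proof -
  have "(\<lambda>i. a (i + n) * y ^ (i + n)) sums f y"
    using sums_iff_shift[of "\<lambda>k. a k * y ^ k" n "f y"] sums[OF \<open>\<bar>y\<bar> < r\<close>] zero by simp
  then have shifted: "(\<lambda>i. y ^ n * (a (i + n) * y ^ i)) sums f y"
    by (simp add: power_add mult_ac)
  show summable: "summable (\<lambda>i. a (i + n) * y ^ i)"
  proof (cases "y = 0")
    case False
    have "(\<lambda>i. inverse (y ^ n) * (y ^ n * (a (i + n) * y ^ i))) sums (inverse (y ^ n) * f y)"
      using sums_mult[OF shifted] by blast
    moreover have "inverse (y ^ n) * (y ^ n * (a (i + n) * y ^ i)) = a (i + n) * y ^ i" for i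
      using False by simp
    ultimately show ?thesis by (simp add: sums_summable)
  qed simp
  show "f y = y ^ n * (\<Sum>i. a (i + n) * y ^ i)"
    using sums_unique2[OF shifted sums_mult[OF summable_sums[OF summable]]] .
qed

lemma admissible_phi_factor:
  assumes "admissible_phi phi n"
  obtains r chi chi1 chi2 where "0 < r" "chi 0 > 0" "\<forall>x\<in>{0..<r}. phi x = x ^ n * chi x"
    "C2_on {-r<..<r} chi chi1 chi2"
proof -
  obtain psi S where S: "open S" "{0..1} \<subseteq> S" "real_analytic_on psi S"
    "\<forall>x\<in>{0..1}. phi x = psi x" "\<forall>k<n. (deriv ^^ k) psi 0 = 0" "(deriv ^^ n) psi 0 > 0"
    using assms unfolding admissible_phi_def by blast
  have "0 \<in> S" using S(2) by auto
  then obtain r0 a where r0: "r0 > 0" and sums: "\<And>y. \<bar>y\<bar> < r0 \<Longrightarrow> (\<lambda>k. a k * y ^ k) sums psi y"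
    using S(3) unfolding real_analytic_on_def by fastforce
  have coeff: "(deriv ^^ k) psi 0 = fact k * a k" for k
  proof -
    have "(deriv ^^ k) psi 0 = (diffs ^^ k) a 0"
      using deriv_funpow_powser[OF sums, where x = 0 and k = k] r0 by simp
    then show ?thesis by (simp add: funpow_diffs)
  qed
  then have "a k = 0" if "k < n" for k
    using S(5) that by simp
  note factor = powser_factor_power[OF sums this]
  define chi where "chi y = (\<Sum>i. a (i + n) * y ^ i)" for y
  have "\<forall>x\<in>{0..<min r0 1}. phi x = x ^ n * chi x"
    using S(4) factor(2) by (auto simp: chi_def)
  moreover have "chi 0 > 0"
    using S(6) coeff[of n] by (simp add: chi_def zero_less_mult_iff)
  moreover have "C2_on {-r0<..<r0} chi (\<lambda>y. \<Sum>i. diffs (\<lambda>i. a (i + n)) i * y ^ i)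
                   (\<lambda>y. \<Sum>i. diffs (diffs (\<lambda>i. a (i + n))) i * y ^ i)"
    unfolding chi_def[abs_def] by (rule powser_C2_on[OF factor(1)])
  then have "C2_on {-min r0 1<..<min r0 1} chi (\<lambda>y. \<Sum>i. diffs (\<lambda>i. a (i + n)) i * y ^ i)
                   (\<lambda>y. \<Sum>i. diffs (diffs (\<lambda>i. a (i + n))) i * y ^ i)"
    by (rule C2_on_subset) auto
  ultimately show ?thesis using r0 by (intro that[of "min r0 1"]) auto
qed

section \<open>The index in terms of derivative values\<close>

definition kappa_of :: "(real \<Rightarrow> real) \<Rightarrow> (real \<Rightarrow> real) \<Rightarrow> real \<Rightarrow> real" where
  "kappa_of rf pf V = (rf V + pf V) / (rf V + 3 * pf V) * (deriv rf V / deriv pf V)"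

definition Iind_of :: "(real \<Rightarrow> real) \<Rightarrow> (real \<Rightarrow> real) \<Rightarrow> real \<Rightarrow> real" where
  "Iind_of rf pf V = (1 / 5) * (kappa_of rf pf V) ^ 2 + 2 * kappa_of rf pf V +
     (rf V + pf V) * (deriv (kappa_of rf pf) V / deriv pf V)"

lemma Iind_eq_Iind_of: "Iind phi E0 = Iind_of (rho phi E0) (pres phi E0)"
proof -
  have "kappa phi E0 = kappa_of (rho phi E0) (pres phi E0)"
    by (simp add: fun_eq_iff kappa_def kappa_of_def)
  then show ?thesis by (intro ext) (simp only: Iind_def Iind_of_def)
qed

definition Iind_expr :: "real \<Rightarrow> real \<Rightarrow> real \<Rightarrow> real \<Rightarrow> real \<Rightarrow> real \<Rightarrow> real" where
  "Iind_expr r p r1 p1 r2 p2 =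
     (let k = (r + p) / (r + 3 * p) * (r1 / p1);
          k1 = ((r1 + p1) * (r + 3 * p) - (r + p) * (r1 + 3 * p1)) / (r + 3 * p)\<^sup>2 * (r1 / p1) +
               (r2 * p1 - r1 * p2) / p1\<^sup>2 * ((r + p) / (r + 3 * p))
      in k\<^sup>2 / 5 + 2 * k + (r + p) * (k1 / p1))"

lemma Iind_of_eq_Iind_expr:
  assumes "open T" "V \<in> T"
    and derivs: "\<And>W. W \<in> T \<Longrightarrow> (rf has_real_derivative dr W) (at W) \<and> (pf has_real_derivative dp W) (at W)"
    and "(dr has_real_derivative ddr) (at V)" "(dp has_real_derivative ddp) (at V)"
    and "rf V + 3 * pf V \<noteq> 0" "dp V \<noteq> 0"
  shows "Iind_of rf pf V = Iind_expr (rf V) (pf V) (dr V) (dp V) ddr ddp"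
proof -
  define k where "k W = (rf W + pf W) / (rf W + 3 * pf W) * (dr W / dp W)" for W
  have kappa: "kappa_of rf pf W = k W" if "W \<in> T" for W
  proof -
    have "deriv rf W = dr W" "deriv pf W = dp W"
      using derivs[OF that] by (auto intro: DERIV_imp_deriv)
    then show ?thesis by (simp add: kappa_of_def k_def)
  qed
  have dF: "((\<lambda>W. (rf W + pf W) / (rf W + 3 * pf W)) has_real_derivative
          ((dr V + dp V) * (rf V + 3 * pf V) - (rf V + pf V) * (dr V + 3 * dp V)) / (rf V + 3 * pf V)\<^sup>2) (at V)"
    using derivs[OF assms(2)] assms(6)
    by (auto intro!: derivative_eq_intros simp: power2_eq_square)
  have dQ: "((\<lambda>W. dr W / dp W) has_real_derivative (ddr * dp V - dr V * ddp) / (dp V)\<^sup>2) (at V)"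
    using assms(4,5,7) by (auto intro!: derivative_eq_intros simp: power2_eq_square)
  have "(k has_real_derivative
          ((dr V + dp V) * (rf V + 3 * pf V) - (rf V + pf V) * (dr V + 3 * dp V)) / (rf V + 3 * pf V)\<^sup>2 *
          (dr V / dp V) + (ddr * dp V - dr V * ddp) / (dp V)\<^sup>2 * ((rf V + pf V) / (rf V + 3 * pf V))) (at V)"
    unfolding k_def[abs_def] by (rule DERIV_mult[OF dF dQ])
  then have "(kappa_of rf pf has_real_derivative
          ((dr V + dp V) * (rf V + 3 * pf V) - (rf V + pf V) * (dr V + 3 * dp V)) / (rf V + 3 * pf V)\<^sup>2 *
          (dr V / dp V) + (ddr * dp V - dr V * ddp) / (dp V)\<^sup>2 * ((rf V + pf V) / (rf V + 3 * pf V))) (at V)"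
    by (rule has_field_derivative_transform_within_open[OF _ assms(1,2)]) (simp add: kappa)
  then show ?thesis
    using kappa[OF assms(2)] derivs[OF assms(2)]
    by (simp add: Iind_of_def Iind_expr_def Let_def k_def DERIV_imp_deriv)
qed

text \<open>\<open>Iind_profile\<close> is \<open>h\<^sup>2\<close> times the index at \<open>E\<^sub>0 - h\<close> when \<open>\<rho>(E\<^sub>0 - h) = h\<^sup>a R(h)\<close> and
  \<open>p(E\<^sub>0 - h) = h\<^sup>a\<^sup>+\<^sup>1 P(h)\<close>; the arguments \<open>r1, q1, r2, q2\<close> are the first and second
  \<open>h\<close>-derivatives of these two functions with the powers of \<open>h\<close> divided out.\<close>
definition Iind_profile :: "real \<Rightarrow> real \<Rightarrow> real \<Rightarrow> real \<Rightarrow> real \<Rightarrow> real \<Rightarrow> real \<Rightarrow> real" where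
  "Iind_profile h R P r1 q1 r2 q2 =
     (let f = (R + h * P) / (R + 3 * h * P); u = f * r1 / q1
      in u\<^sup>2 / 5 + 2 * h * u + (R + h * P) / q1 *
           (2 * h * (r1 * P - R * q1) / (R + 3 * h * P)\<^sup>2 * r1 / q1 + f * ((r2 * q1 - r1 * q2) / q1\<^sup>2)))"

text \<open>The first derivatives carry a minus sign because \<open>V = E\<^sub>0 - h\<close>; it cancels in the index.\<close>
lemma Iind_expr_scaling:
  assumes "t > 0" "h > 0" "R + 3 * h * P \<noteq> 0" "q1 \<noteq> 0"
  shows "Iind_expr (t * R) (t * h * P) (- (t / h * r1)) (- (t * q1)) (t / h\<^sup>2 * r2) (t / h * q2) =
         Iind_profile h R P r1 q1 r2 q2 / h\<^sup>2"
proof -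
  have nz: "t \<noteq> 0" "h \<noteq> 0" "R + 3 * (h * P) \<noteq> 0" using assms by (auto simp: mult.assoc)
  define S where "S = (R + 3 * h * P)\<^sup>2"
  have S: "S \<noteq> 0" using assms(3) by (simp add: S_def)
  define f where "f = (R + h * P) / (R + 3 * h * P)"
  define u where "u = f * r1 / q1"
  define D where "D = 2 * h * (r1 * P - R * q1) / S * r1 / q1 + f * ((r2 * q1 - r1 * q2) / q1\<^sup>2)"
  have f: "(t * R + t * h * P) / (t * R + 3 * (t * h * P)) = f"
  proof -
    have "(t * R + t * h * P) / (t * R + 3 * (t * h * P)) = (t * (R + h * P)) / (t * (R + 3 * h * P))"
      by (simp add: algebra_simps)
    then show ?thesis using nz by (simp add: f_def)
  qed
  have ratio: "- (t / h * r1) / - (t * q1) = r1 / (h * q1)"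
    using nz by simp
  have k: "(t * R + t * h * P) / (t * R + 3 * (t * h * P)) * (- (t / h * r1) / - (t * q1)) = u / h"
    unfolding f ratio using nz assms(4) by (simp add: u_def)
  have df: "((- (t / h * r1) + - (t * q1)) * (t * R + 3 * (t * h * P)) -
            (t * R + t * h * P) * (- (t / h * r1) + 3 * - (t * q1))) / (t * R + 3 * (t * h * P))\<^sup>2 =
         - (2 * (r1 * P - R * q1) / S)"
  proof -
    have "(- (t / h * r1) + - (t * q1)) * (t * R + 3 * (t * h * P)) -
            (t * R + t * h * P) * (- (t / h * r1) + 3 * - (t * q1)) = - (2 * t\<^sup>2 * (r1 * P - R * q1))"
      using nz by (simp add: field_simps power2_eq_square)
    moreover have "(t * R + 3 * (t * h * P))\<^sup>2 = t\<^sup>2 * S"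
      by (simp add: S_def power2_eq_square algebra_simps)
    ultimately show ?thesis using nz by simp
  qed
  have dq: "(t / h\<^sup>2 * r2 * - (t * q1) - - (t / h * r1) * (t / h * q2)) / (- (t * q1))\<^sup>2 =
         - ((r2 * q1 - r1 * q2) / (h\<^sup>2 * q1\<^sup>2))"
    using nz assms(4) by (simp add: field_simps power2_eq_square)
  have k1: "((- (t / h * r1) + - (t * q1)) * (t * R + 3 * (t * h * P)) -
            (t * R + t * h * P) * (- (t / h * r1) + 3 * - (t * q1))) / (t * R + 3 * (t * h * P))\<^sup>2 *
            (- (t / h * r1) / - (t * q1)) +
          (t / h\<^sup>2 * r2 * - (t * q1) - - (t / h * r1) * (t / h * q2)) / (- (t * q1))\<^sup>2 *
            ((t * R + t * h * P) / (t * R + 3 * (t * h * P))) = - D / h\<^sup>2"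
    unfolding df dq f ratio using nz assms(4) S by (simp add: D_def field_simps power2_eq_square)
  have "Iind_expr (t * R) (t * h * P) (- (t / h * r1)) (- (t * q1)) (t / h\<^sup>2 * r2) (t / h * q2) =
        (u / h)\<^sup>2 / 5 + 2 * (u / h) + (t * R + t * h * P) * (- D / h\<^sup>2 / - (t * q1))"
    unfolding Iind_expr_def Let_def k k1 ..
  also have "\<dots> = (u\<^sup>2 / 5 + 2 * h * u + (R + h * P) / q1 * D) / h\<^sup>2"
    using nz assms(4) by (simp add: field_simps power2_eq_square)
  also have "\<dots> = Iind_profile h R P r1 q1 r2 q2 / h\<^sup>2"
    by (simp add: Iind_profile_def Let_def f_def u_def D_def S_def)
  finally show ?thesis .
qed

lemma Iind_profile_zero:
  assumes "a + 1 \<noteq> 0" "R \<noteq> 0" "P \<noteq> 0"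
  shows "Iind_profile 0 R P (a * R) ((a + 1) * P) (a * (a - 1) * R) ((a + 1) * a * P) =
         a * R\<^sup>2 / ((a + 1)\<^sup>2 * P\<^sup>2) * (a / 5 - 1)"
proof -
  define c where "c = (a + 1) * P"
  have c: "c \<noteq> 0" using assms by (simp add: c_def)
  have "(a + 1) * a * P = a * c" "(a + 1)\<^sup>2 * P\<^sup>2 = c\<^sup>2"
    by (simp_all add: c_def algebra_simps power2_eq_square)
  then show ?thesis
    unfolding Iind_profile_def Let_def c_def[symmetric] using c assms(2)
    by (simp add: field_simps power2_eq_square)
qed

lemma tendsto_Iind_profile:
  assumes "(h \<longlongrightarrow> h0) F" "(R \<longlongrightarrow> R0) F" "(P \<longlongrightarrow> P0) F" "(r1 \<longlongrightarrow> r10) F" "(q1 \<longlongrightarrow> q10) F"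
    "(r2 \<longlongrightarrow> r20) F" "(q2 \<longlongrightarrow> q20) F" "R0 + 3 * h0 * P0 \<noteq> 0" "q10 \<noteq> 0"
  shows "((\<lambda>x. Iind_profile (h x) (R x) (P x) (r1 x) (q1 x) (r2 x) (q2 x)) \<longlongrightarrow>
           Iind_profile h0 R0 P0 r10 q10 r20 q20) F"
  unfolding Iind_profile_def Let_def using assms by (intro tendsto_intros) auto

section \<open>Behaviour of the index near \<open>E\<^sub>0\<close>\<close>

lemma has_real_derivative_powr_mult:
  assumes "0 < x" "(R has_real_derivative R1) (at x)"
  shows "((\<lambda>y. y powr a * R y) has_real_derivative x powr a / x * (a * R x + x * R1)) (at x)"
  using assms by (auto intro!: derivative_eq_intros simp: powr_diff field_simps)

lemma has_real_derivative_powr_mult2: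
  assumes "0 < x" "(R has_real_derivative R1 x) (at x)" "(R1 has_real_derivative R2) (at x)"
  shows "((\<lambda>y. y powr a / y * (a * R y + y * R1 y)) has_real_derivative
           x powr a / x\<^sup>2 * (a * (a - 1) * R x + 2 * a * x * R1 x + x\<^sup>2 * R2)) (at x)"
  using assms by (auto intro!: derivative_eq_intros simp: powr_diff field_simps power2_eq_square)

lemma has_real_derivative_reflect:
  assumes "(G has_real_derivative G') (at (c - x))"
  shows "((\<lambda>y. G (c - y)) has_real_derivative - G') (at x)"
proof -
  have "((\<lambda>y. G (c - y)) has_real_derivative G' * (- 1)) (at x)"
    by (rule DERIV_chain2[where g = "\<lambda>y. c - y", OF assms]) (auto intro!: derivative_eq_intros)
  then show ?thesis by simp
qed

lemma has_real_derivative_reflect_minus: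
  assumes "(G has_real_derivative G') (at x)"
  shows "((\<lambda>y. - G (c - y)) has_real_derivative G') (at (c - x))"
proof -
  have "(G has_real_derivative G') (at (c - (c - x)))" using assms by simp
  from DERIV_minus[OF has_real_derivative_reflect[OF this]] show ?thesis by simp
qed

lemma reflected_powr_has_derivatives:
  assumes h: "0 < h" "h < \<delta>"
    and expand: "\<And>x. x \<in> {0<..<\<delta>} \<Longrightarrow> g (E0 - x) = x powr a * R x" and R: "C2_on {0<..<\<delta>} R R1 R2"
  shows "\<And>W. W \<in> {E0 - \<delta><..<E0} \<Longrightarrow>
           (g has_real_derivative - ((E0 - W) powr a / (E0 - W) * (a * R (E0 - W) + (E0 - W) * R1 (E0 - W)))) (at W)"
    and "((\<lambda>W. - ((E0 - W) powr a / (E0 - W) * (a * R (E0 - W) + (E0 - W) * R1 (E0 - W))))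
           has_real_derivative h powr a / h\<^sup>2 * (a * (a - 1) * R h + 2 * a * h * R1 h + h\<^sup>2 * R2 h)) (at (E0 - h))"
proof -
  fix W assume W: "W \<in> {E0 - \<delta><..<E0}"
  have "((\<lambda>y. (E0 - y) powr a * R (E0 - y)) has_real_derivative
          - ((E0 - W) powr a / (E0 - W) * (a * R (E0 - W) + (E0 - W) * R1 (E0 - W)))) (at W)"
    using R W by (intro has_real_derivative_reflect has_real_derivative_powr_mult) (auto simp: C2_on_def)
  then show "(g has_real_derivative - ((E0 - W) powr a / (E0 - W) * (a * R (E0 - W) + (E0 - W) * R1 (E0 - W)))) (at W)"
  proof (rule has_field_derivative_transform_within_open[OF _ _ W])
    show "(E0 - y) powr a * R (E0 - y) = g y" if "y \<in> {E0 - \<delta><..<E0}" for y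
      using expand[of "E0 - y"] that by auto
  qed simp
next
  have "((\<lambda>x. x powr a / x * (a * R x + x * R1 x)) has_real_derivative
          h powr a / h\<^sup>2 * (a * (a - 1) * R h + 2 * a * h * R1 h + h\<^sup>2 * R2 h)) (at h)"
    by (rule has_real_derivative_powr_mult2) (use R h in \<open>simp_all add: C2_on_def\<close>)
  then show "((\<lambda>W. - ((E0 - W) powr a / (E0 - W) * (a * R (E0 - W) + (E0 - W) * R1 (E0 - W))))
           has_real_derivative h powr a / h\<^sup>2 * (a * (a - 1) * R h + 2 * a * h * R1 h + h\<^sup>2 * R2 h)) (at (E0 - h))"
    by (rule has_real_derivative_reflect_minus)
qed

lemma Iind_of_reflected_powr:
  assumes h: "0 < h" "h < \<delta>"
    and expand: "\<And>x. x \<in> {0<..<\<delta>} \<Longrightarrow> rf (E0 - x) = x powr a * R x \<and> pf (E0 - x) = x powr (a + 1) * P x"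
    and R: "C2_on {0<..<\<delta>} R R1 R2" and P: "C2_on {0<..<\<delta>} P P1 P2"
    and nz: "R h + 3 * h * P h \<noteq> 0" "(a + 1) * P h + h * P1 h \<noteq> 0"
  shows "Iind_of rf pf (E0 - h) =
           Iind_profile h (R h) (P h) (a * R h + h * R1 h) ((a + 1) * P h + h * P1 h)
             (a * (a - 1) * R h + 2 * a * h * R1 h + h\<^sup>2 * R2 h)
             ((a + 1) * a * P h + 2 * (a + 1) * h * P1 h + h\<^sup>2 * P2 h) / h\<^sup>2"
    (is "_ = ?profile")
proof -
  define D1r where "D1r x = x powr a / x * (a * R x + x * R1 x)" for x
  define D1p where "D1p x = x powr (a + 1) / x * ((a + 1) * P x + x * P1 x)" for x
  define T where "T = {E0 - \<delta><..<E0}"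
  have inT: "E0 - h \<in> T" using h by (simp add: T_def)
  note dR = reflected_powr_has_derivatives[of h \<delta> rf E0 a R R1 R2, folded D1r_def T_def]
  note dP = reflected_powr_has_derivatives[of h \<delta> pf E0 "a + 1" P P1 P2, folded D1p_def T_def]
  have first: "(rf has_real_derivative - D1r (E0 - W)) (at W) \<and> (pf has_real_derivative - D1p (E0 - W)) (at W)"
    if "W \<in> T" for W
    using dR(1) dP(1) h expand R P that by blast
  have second:
    "((\<lambda>W. - D1r (E0 - W)) has_real_derivative
        h powr a / h\<^sup>2 * (a * (a - 1) * R h + 2 * a * h * R1 h + h\<^sup>2 * R2 h)) (at (E0 - h))"
    "((\<lambda>W. - D1p (E0 - W)) has_real_derivative
        h powr (a + 1) / h\<^sup>2 * ((a + 1) * (a + 1 - 1) * P h + 2 * (a + 1) * h * P1 h + h\<^sup>2 * P2 h))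
        (at (E0 - h))"
    using dR(2) dP(2) h expand R P by blast+
  have t: "h powr a > 0" "h powr (a + 1) = h powr a * h" using h by (auto simp: powr_add)
  have "Iind_of rf pf (E0 - h) =
        Iind_expr (rf (E0 - h)) (pf (E0 - h)) (- D1r (E0 - (E0 - h))) (- D1p (E0 - (E0 - h)))
          (h powr a / h\<^sup>2 * (a * (a - 1) * R h + 2 * a * h * R1 h + h\<^sup>2 * R2 h))
          (h powr (a + 1) / h\<^sup>2 * ((a + 1) * (a + 1 - 1) * P h + 2 * (a + 1) * h * P1 h + h\<^sup>2 * P2 h))"
  proof (rule Iind_of_eq_Iind_expr[where T = T and dr = "\<lambda>W. - D1r (E0 - W)" and dp = "\<lambda>W. - D1p (E0 - W)"])
    show "open T" by (simp add: T_def)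
    have "rf (E0 - h) + 3 * pf (E0 - h) = h powr a * (R h + 3 * h * P h)"
      using expand[of h] h t by (simp add: algebra_simps)
    then show "rf (E0 - h) + 3 * pf (E0 - h) \<noteq> 0"
      using t nz(1) by simp
    show "- D1p (E0 - (E0 - h)) \<noteq> 0"
      using h t nz(2) by (simp add: D1p_def)
  qed (use inT first second in auto)
  also have "\<dots> = Iind_expr (h powr a * R h) (h powr a * h * P h) (- (h powr a / h * (a * R h + h * R1 h)))
          (- (h powr a * ((a + 1) * P h + h * P1 h)))
          (h powr a / h\<^sup>2 * (a * (a - 1) * R h + 2 * a * h * R1 h + h\<^sup>2 * R2 h))
          (h powr a / h * ((a + 1) * a * P h + 2 * (a + 1) * h * P1 h + h\<^sup>2 * P2 h))"
    using expand[of h] h t by (simp add: D1r_def D1p_def power2_eq_square field_simps)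
  also have "\<dots> = ?profile"
    by (rule Iind_expr_scaling) (use t h nz in \<open>auto simp: mult.assoc\<close>)
  finally show ?thesis .
qed

lemma at_left_eq_filtermap_reflect: "at_left (c :: real) = filtermap (\<lambda>h. c - h) (at_right 0)"
  unfolding at_left_minus[of c] at_right_to_0[of "- c"] filtermap_filtermap
  by (simp add: o_def)

lemma C2_on_tendsto_at_right:
  assumes "C2_on {-\<delta><..<\<delta>} f f1 f2" "0 < \<delta>"
  shows "(f \<longlongrightarrow> f 0) (at_right 0)" "(f1 \<longlongrightarrow> f1 0) (at_right 0)" "(f2 \<longlongrightarrow> f2 0) (at_right 0)"
proof -
  have "isCont f 0" "isCont f1 0" "isCont f2 0"
    using assms continuous_on_interior[of "{-\<delta><..<\<delta>}" f2 0]
    by (auto simp: C2_on_def intro: DERIV_isCont)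
  then show "(f \<longlongrightarrow> f 0) (at_right 0)" "(f1 \<longlongrightarrow> f1 0) (at_right 0)" "(f2 \<longlongrightarrow> f2 0) (at_right 0)"
    unfolding isCont_def by (auto intro: tendsto_mono[OF at_le, rotated])
qed

lemma filterlim_neg_div_square_at_bot:
  assumes "(f \<longlongrightarrow> L) (at_right 0)" "L < (0 :: real)"
  shows "filterlim (\<lambda>h. f h * (1 / h\<^sup>2)) at_bot (at_right 0)"
proof -
  have "((\<lambda>h :: real. h\<^sup>2) \<longlongrightarrow> 0) (at_right 0)"
    by (auto intro!: tendsto_eq_intros)
  moreover have "\<forall>\<^sub>F h in at_right 0. 0 < (h :: real)\<^sup>2"
    using eventually_at_right_less[of "0 :: real"] by eventually_elim simp
  ultimately have "filterlim (\<lambda>h :: real. inverse (h\<^sup>2)) at_top (at_right 0)"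
    by (rule filterlim_inverse_at_top)
  then have "filterlim (\<lambda>h :: real. 1 / h\<^sup>2) at_top (at_right 0)"
    by (simp add: inverse_eq_divide)
  with assms show ?thesis
    by (rule filterlim_tendsto_neg_mult_at_bot)
qed

text \<open>Near \<open>E\<^sub>0\<close> the index behaves like \<open>L / (E\<^sub>0 - V)\<^sup>2\<close> with
  \<open>L = a R(0)\<^sup>2 (a / 5 - 1) / ((a + 1) P(0))\<^sup>2\<close>, which is negative exactly when \<open>a < 5\<close>.\<close>
lemma Iind_of_tendsto_at_bot:
  assumes a: "0 < a" "a < 5" and "0 < \<delta>"
    and R: "C2_on {-\<delta><..<\<delta>} R R1 R2" and P: "C2_on {-\<delta><..<\<delta>} P P1 P2"
    and pos: "R 0 > 0" "P 0 > 0"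
    and expand: "\<And>h. h \<in> {0<..<\<delta>} \<Longrightarrow> rf (E0 - h) = h powr a * R h \<and> pf (E0 - h) = h powr (a + 1) * P h"
  shows "filterlim (Iind_of rf pf) at_bot (at_left E0)"
proof -
  note limR = C2_on_tendsto_at_right[OF R \<open>0 < \<delta>\<close>]
  note limP = C2_on_tendsto_at_right[OF P \<open>0 < \<delta>\<close>]
  define q1 where "q1 h = (a + 1) * P h + h * P1 h" for h
  define profile where "profile h =
    Iind_profile h (R h) (P h) (a * R h + h * R1 h) (q1 h) (a * (a - 1) * R h + 2 * a * h * R1 h + h\<^sup>2 * R2 h)
      ((a + 1) * a * P h + 2 * (a + 1) * h * P1 h + h\<^sup>2 * P2 h)" for h
  have "(profile \<longlongrightarrow> Iind_profile 0 (R 0) (P 0) (a * R 0 + 0 * R1 0) ((a + 1) * P 0 + 0 * P1 0)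
          (a * (a - 1) * R 0 + 2 * a * 0 * R1 0 + 0\<^sup>2 * R2 0) ((a + 1) * a * P 0 + 2 * (a + 1) * 0 * P1 0 + 0\<^sup>2 * P2 0))
          (at_right 0)"
    unfolding profile_def[abs_def] q1_def
    by (intro tendsto_Iind_profile tendsto_intros limR limP) (use a pos in auto)
  then have lim: "(profile \<longlongrightarrow> a * (R 0)\<^sup>2 / ((a + 1)\<^sup>2 * (P 0)\<^sup>2) * (a / 5 - 1)) (at_right 0)"
    using Iind_profile_zero[of a "R 0" "P 0"] a pos by simp
  have neg: "a * (R 0)\<^sup>2 / ((a + 1)\<^sup>2 * (P 0)\<^sup>2) * (a / 5 - 1) < 0"
    using a pos by (intro mult_pos_neg) auto
  from lim neg have "filterlim (\<lambda>h. profile h * (1 / h\<^sup>2)) at_bot (at_right 0)"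
    by (rule filterlim_neg_div_square_at_bot)
  moreover have "\<forall>\<^sub>F h in at_right 0. profile h * (1 / h\<^sup>2) = Iind_of rf pf (E0 - h)"
  proof -
    have "((\<lambda>h. R h + 3 * h * P h) \<longlongrightarrow> R 0 + 3 * 0 * P 0) (at_right 0)"
         "(q1 \<longlongrightarrow> (a + 1) * P 0 + 0 * P1 0) (at_right 0)"
      unfolding q1_def by (intro tendsto_intros limR limP)+
    then have "\<forall>\<^sub>F h in at_right 0. R h + 3 * h * P h > 0" "\<forall>\<^sub>F h in at_right 0. q1 h > 0"
      using a pos by (auto dest: order_tendstoD(1)[where a = 0])
    moreover have "\<forall>\<^sub>F h in at_right 0. h \<in> {0<..<\<delta>}"
      using eventually_at_right_real[OF \<open>0 < \<delta>\<close>] by simp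
    ultimately show ?thesis
    proof eventually_elim
      case (elim h)
      have "C2_on {0<..<\<delta>} R R1 R2" "C2_on {0<..<\<delta>} P P1 P2"
        using R P by (auto intro: C2_on_subset)
      with elim show ?case
        using Iind_of_reflected_powr[of h \<delta> rf E0 a R pf P R1 R2 P1 P2] expand
        by (simp add: profile_def q1_def)
    qed
  qed
  ultimately have "filterlim (\<lambda>h. Iind_of rf pf (E0 - h)) at_bot (at_right 0)"
    by (rule filterlim_cong[THEN iffD1, OF refl refl, rotated])
  then show ?thesis
    unfolding at_left_eq_filtermap_reflect filterlim_filtermap .
qed

section \<open>Parameter integrals\<close>

definition C2_kernel :: "real set \<Rightarrow> (real \<Rightarrow> real \<Rightarrow> real) \<Rightarrow> (real \<Rightarrow> real \<Rightarrow> real) \<Rightarrow>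
    (real \<Rightarrow> real \<Rightarrow> real) \<Rightarrow> bool" where
  "C2_kernel U K K1 K2 \<longleftrightarrow>
     (\<forall>h\<in>U. \<forall>u\<in>{0..1}. ((\<lambda>h. K h u) has_real_derivative K1 h u) (at h) \<and>
        ((\<lambda>h. K1 h u) has_real_derivative K2 h u) (at h)) \<and>
     continuous_on (U \<times> {0..1}) (\<lambda>p. K (fst p) (snd p)) \<and>
     continuous_on (U \<times> {0..1}) (\<lambda>p. K1 (fst p) (snd p)) \<and>
     continuous_on (U \<times> {0..1}) (\<lambda>p. K2 (fst p) (snd p))"

lemma continuous_on_Times_snd:
  "continuous_on {0..1} c \<Longrightarrow> continuous_on (U \<times> {0..1}) (\<lambda>p. c (snd p))"
  by (rule continuous_on_compose2[OF _ continuous_on_snd]) auto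

lemma continuous_on_Times_fst:
  "continuous_on U m \<Longrightarrow> continuous_on (U \<times> {0..1 :: real}) (\<lambda>p. m (fst p))"
  by (rule continuous_on_compose2[OF _ continuous_on_fst]) auto

lemma continuous_on_Times_slice:
  assumes "continuous_on (U \<times> {0..1}) (\<lambda>p. F (fst p) (snd p))" "h \<in> U"
  shows "continuous_on {0..1} (F h)"
  by (rule continuous_on_compose2[OF assms(1), of _ "\<lambda>u. (h, u)", simplified])
     (use assms(2) in \<open>auto intro!: continuous_intros\<close>)

lemma C2_kernel_mult:
  assumes "C2_kernel U G G1 G2" "C2_kernel U H H1 H2"
  shows "C2_kernel U (\<lambda>h u. G h u * H h u) (\<lambda>h u. G1 h u * H h u + G h u * H1 h u)
     (\<lambda>h u. G2 h u * H h u + 2 * (G1 h u * H1 h u) + G h u * H2 h u)"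
proof -
  have "((\<lambda>h. G h u * H h u) has_real_derivative G1 h u * H h u + G h u * H1 h u) (at h) \<and>
     ((\<lambda>h. G1 h u * H h u + G h u * H1 h u) has_real_derivative
        G2 h u * H h u + 2 * (G1 h u * H1 h u) + G h u * H2 h u) (at h)"
    if "h \<in> U" "u \<in> {0..1}" for h u
  proof -
    have "((\<lambda>h. G h u) has_real_derivative G1 h u) (at h)" "((\<lambda>h. G1 h u) has_real_derivative G2 h u) (at h)"
      "((\<lambda>h. H h u) has_real_derivative H1 h u) (at h)" "((\<lambda>h. H1 h u) has_real_derivative H2 h u) (at h)"
      using assms that unfolding C2_kernel_def by auto
    then show ?thesis
      by (intro conjI) (rule derivative_eq_intros refl | simp add: algebra_simps)+
  qed
  with assms show ?thesis
    unfolding C2_kernel_def by (auto intro!: continuous_intros)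
qed

lemma C2_kernel_of_snd:
  assumes "continuous_on {0..1} c"
  shows "C2_kernel U (\<lambda>h u. c u) (\<lambda>h u. 0) (\<lambda>h u. 0)"
  unfolding C2_kernel_def using continuous_on_Times_snd[OF assms] by auto

lemma C2_kernel_of_fst:
  assumes "C2_on U m m1 m2"
  shows "C2_kernel U (\<lambda>h u. m h) (\<lambda>h u. m1 h) (\<lambda>h u. m2 h)"
proof -
  have "continuous_on U m" "continuous_on U m1"
    using assms by (auto simp: C2_on_def intro!: continuous_at_imp_continuous_on DERIV_isCont)
  with assms show ?thesis
    unfolding C2_kernel_def C2_on_def by (auto intro: continuous_on_Times_fst)
qed

lemma C2_kernel_affine:
  assumes "continuous_on {0..1} b"
  shows "C2_kernel U (\<lambda>h u. c - h * b u) (\<lambda>h u. - b u) (\<lambda>h u. 0)"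
  unfolding C2_kernel_def using continuous_on_Times_snd[OF assms]
  by (auto intro!: derivative_eq_intros continuous_intros)

lemma C2_kernel_sqrt_affine:
  assumes "continuous_on {0..1} b" "\<And>h u. h \<in> U \<Longrightarrow> u \<in> {0..1} \<Longrightarrow> c - h * b u > 0"
  shows "C2_kernel U (\<lambda>h u. sqrt (c - h * b u)) (\<lambda>h u. - b u / (2 * sqrt (c - h * b u)))
     (\<lambda>h u. - (b u * b u) / (4 * ((c - h * b u) * sqrt (c - h * b u))))"
proof -
  have cb: "continuous_on (U \<times> {0..1}) (\<lambda>p. b (snd p))"
    using continuous_on_Times_snd[OF assms(1)] .
  have pos: "\<And>p. p \<in> U \<times> {0..1} \<Longrightarrow> c - fst p * b (snd p) > 0" using assms(2) by auto
  have "((\<lambda>h. sqrt (c - h * b u)) has_real_derivative - b u / (2 * sqrt (c - h * b u))) (at h) \<and>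
     ((\<lambda>h. - b u / (2 * sqrt (c - h * b u))) has_real_derivative
       - (b u * b u) / (4 * ((c - h * b u) * sqrt (c - h * b u)))) (at h)"
    if "h \<in> U" "u \<in> {0..1}" for h u
    using assms(2)[OF that]
    by (intro conjI) (rule derivative_eq_intros refl | simp add: field_simps power2_eq_square)+
  moreover have "continuous_on (U \<times> {0..1}) (\<lambda>p. - b (snd p) / (2 * sqrt (c - fst p * b (snd p))))"
    using pos by (intro continuous_intros cb) force
  moreover have "continuous_on (U \<times> {0..1}) (\<lambda>p. - (b (snd p) * b (snd p)) /
       (4 * ((c - fst p * b (snd p)) * sqrt (c - fst p * b (snd p)))))"
    using pos by (intro continuous_intros cb) force
  ultimately show ?thesis
    unfolding C2_kernel_def using cb by (auto intro!: continuous_intros)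
qed

lemma C2_kernel_comp_scaled:
  assumes chi: "C2_on {-r<..<r} chi chi1 chi2" and "E0 > 0" and U: "\<And>h. h \<in> U \<Longrightarrow> \<bar>h\<bar> < r * E0"
  shows "C2_kernel U (\<lambda>h u. chi (h * u / E0)) (\<lambda>h u. chi1 (h * u / E0) * (u / E0))
           (\<lambda>h u. chi2 (h * u / E0) * (u / E0)\<^sup>2)"
proof -
  have inr: "h * u / E0 \<in> {-r<..<r}" if "h \<in> U" "u \<in> {0..1}" for h u
  proof -
    have "\<bar>h * u / E0\<bar> \<le> \<bar>h\<bar> / E0"
      using that \<open>E0 > 0\<close> by (simp add: abs_mult divide_right_mono mult_left_le)
    also have "\<dots> < r" using U[OF that(1)] \<open>E0 > 0\<close> by (simp add: field_simps)
    finally have "\<bar>h * u / E0\<bar> < r" .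
    then show ?thesis by (auto simp: abs_less_iff simp del: abs_divide abs_mult)
  qed
  have cc: "continuous_on (U \<times> {0..1}) (\<lambda>p. f (fst p * snd p / E0))"
    if "continuous_on {-r<..<r} f" for f
    by (rule continuous_on_compose2[OF that]) (use inr \<open>E0 > 0\<close> in \<open>auto intro!: continuous_intros\<close>)
  have "((\<lambda>h. chi (h * u / E0)) has_real_derivative chi1 (h * u / E0) * (u / E0)) (at h) \<and>
     ((\<lambda>h. chi1 (h * u / E0) * (u / E0)) has_real_derivative chi2 (h * u / E0) * (u / E0)\<^sup>2) (at h)"
    if "h \<in> U" "u \<in> {0..1}" for h u
  proof -
    have d: "(chi has_real_derivative chi1 (h * u / E0)) (at (h * u / E0))"
        "(chi1 has_real_derivative chi2 (h * u / E0)) (at (h * u / E0))"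
      using chi inr[OF that] by (auto simp: C2_on_def)
    have l: "((\<lambda>h. h * u / E0) has_real_derivative u / E0) (at h)"
      using \<open>E0 > 0\<close> by (auto intro!: derivative_eq_intros)
    show ?thesis
      using DERIV_chain2[OF d(1) l] DERIV_cmult_right[OF DERIV_chain2[OF d(2) l], of "u / E0"]
      by (simp add: power2_eq_square mult_ac)
  qed
  then show ?thesis
    unfolding C2_kernel_def using chi C2_on_imp_continuous_on[OF chi] \<open>E0 > 0\<close>
    by (auto simp: C2_on_def intro!: continuous_intros cc)
qed

lemma C2_kernel_slice:
  assumes "C2_kernel U K K1 K2" "h \<in> U"
  shows "continuous_on {0..1} (K h)" "continuous_on {0..1} (K1 h)" "continuous_on {0..1} (K2 h)"
  using assms by (auto simp: C2_kernel_def intro: continuous_on_Times_slice)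

lemma C2_kernel_integral:
  assumes K: "C2_kernel U K K1 K2" and "open U" "convex U"
  shows "C2_on U (\<lambda>h. integral {0..1} (K h)) (\<lambda>h. integral {0..1} (K1 h)) (\<lambda>h. integral {0..1} (K2 h))"
proof -
  have split: "(\<lambda>(x, t). F x t) = (\<lambda>p. F (fst p) (snd p))" for F :: "real \<Rightarrow> real \<Rightarrow> real"
    by (simp add: case_prod_unfold)
  have leibniz: "((\<lambda>h. integral {0..1} (F h)) has_real_derivative integral {0..1} (F1 h)) (at h)"
    if "h \<in> U" "C2_kernel U G F F1 \<or> C2_kernel U F F1 G" for F F1 G h
  proof -
    have dF: "((\<lambda>x. F x t) has_real_derivative F1 x t) (at x within U)" if "x \<in> U" "t \<in> cbox 0 1" for x t
      using \<open>C2_kernel U G F F1 \<or> C2_kernel U F F1 G\<close> that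
      by (auto simp: C2_kernel_def intro: has_field_derivative_at_within)
    have "F x integrable_on cbox 0 1" if "x \<in> U" for x
      using C2_kernel_slice[OF _ that] \<open>C2_kernel U G F F1 \<or> C2_kernel U F F1 G\<close>
      by (auto intro: integrable_continuous_real)
    moreover have "continuous_on (U \<times> cbox 0 1) (\<lambda>(x, t). F1 x t)"
      using \<open>C2_kernel U G F F1 \<or> C2_kernel U F F1 G\<close> by (auto simp: C2_kernel_def split)
    ultimately have "((\<lambda>h. integral (cbox 0 1) (F h)) has_real_derivative integral (cbox 0 1) (F1 h))
                       (at h within U)"
      by (intro leibniz_rule_field_derivative[where f = F and fx = F1 and U = U and a = 0 and b = 1,
            OF dF _ _ that(1) \<open>convex U\<close>])
    then show ?thesis using at_within_open[OF that(1) \<open>open U\<close>] by simp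
  qed
  have "continuous_on U (\<lambda>h. integral (cbox 0 1) (K2 h))"
    using K by (intro integral_continuous_on_param) (auto simp: C2_kernel_def split)
  then show ?thesis
    unfolding C2_on_def using K by (auto intro: leibniz)
qed

section \<open>Density and pressure as parameter integrals\<close>

text \<open>Substituting \<open>E = E\<^sub>0 - h u\<close> in the integrals defining \<open>\<rho>\<close> and \<open>p\<close> at \<open>V = E\<^sub>0 - h\<close>, and writing
  \<open>\<phi> x = x\<^sup>n \<chi> x\<close>, leaves these integrands after the powers of \<open>h\<close> have been pulled out.\<close>
definition rho_kernel :: "nat \<Rightarrow> (real \<Rightarrow> real) \<Rightarrow> real \<Rightarrow> real \<Rightarrow> real \<Rightarrow> real" where
  "rho_kernel n chi E0 h u = 1 / (E0 - h) ^ 4 * (4 * pi / E0 ^ n * (u ^ n * sqrt (1 - u))) *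
     chi (h * u / E0) * (E0 - h * u)\<^sup>2 * sqrt (2 * E0 - h * (1 + u))"

definition pres_kernel :: "nat \<Rightarrow> (real \<Rightarrow> real) \<Rightarrow> real \<Rightarrow> real \<Rightarrow> real \<Rightarrow> real" where
  "pres_kernel n chi E0 h u = 1 / (E0 - h) ^ 4 * (4 * pi / (3 * E0 ^ n) * (u ^ n * ((1 - u) * sqrt (1 - u)))) *
     chi (h * u / E0) * (2 * E0 - h * (1 + u)) * sqrt (2 * E0 - h * (1 + u))"

lemma C2_on_kernel_integrals:
  assumes "0 < E0" and chi: "C2_on {-r<..<r} chi chi1 chi2" and d: "0 < d" "d \<le> E0" "d \<le> r * E0"
  shows "\<exists>R1 R2. C2_on {-d<..<d} (\<lambda>h. integral {0..1} (rho_kernel n chi E0 h)) R1 R2"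
    and "\<exists>P1 P2. C2_on {-d<..<d} (\<lambda>h. integral {0..1} (pres_kernel n chi E0 h)) P1 P2"
proof -
  define U where "U = {-d<..<d}"
  have hU: "\<bar>h\<bar> < E0" "\<bar>h\<bar> < r * E0" if "h \<in> U" for h
    using that d by (auto simp: U_def)
  have "C2_on U (\<lambda>h. 1 / (E0 - h) ^ 4) (\<lambda>h. 4 / (E0 - h) ^ 5) (\<lambda>h. 20 / (E0 - h) ^ 6)"
  proof -
    have "E0 - h \<noteq> 0" if "h \<in> U" for h using hU[OF that] by auto
    then show ?thesis unfolding C2_on_def
      by (auto intro!: derivative_eq_intros continuous_intros simp: field_simps)
  qed
  note Cm = C2_kernel_of_fst[OF this]
  have Cchi: "C2_kernel U (\<lambda>h u. chi (h * u / E0)) (\<lambda>h u. chi1 (h * u / E0) * (u / E0))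
                (\<lambda>h u. chi2 (h * u / E0) * (u / E0)\<^sup>2)"
    by (rule C2_kernel_comp_scaled[OF chi \<open>0 < E0\<close>]) (use hU in blast)
  have CL: "C2_kernel U (\<lambda>h u. E0 - h * u) (\<lambda>h u. - u) (\<lambda>h u. 0)"
    using C2_kernel_affine[of "\<lambda>u. u" U E0] by (simp add: continuous_on_id)
  have CW: "C2_kernel U (\<lambda>h u. 2 * E0 - h * (1 + u)) (\<lambda>h u. - (1 + u)) (\<lambda>h u. 0)"
    by (rule C2_kernel_affine) (intro continuous_intros)
  have W: "2 * E0 - h * (1 + u) > 0" if "h \<in> U" "u \<in> {0..1}" for h u
  proof -
    have "\<bar>h * (1 + u)\<bar> \<le> \<bar>h\<bar> * 2" using that by (auto simp: abs_mult intro: mult_left_mono)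
    then show ?thesis using hU[OF that(1)] by linarith
  qed
  have CS: "C2_kernel U (\<lambda>h u. sqrt (2 * E0 - h * (1 + u))) (\<lambda>h u. - (1 + u) / (2 * sqrt (2 * E0 - h * (1 + u))))
     (\<lambda>h u. - ((1 + u) * (1 + u)) / (4 * ((2 * E0 - h * (1 + u)) * sqrt (2 * E0 - h * (1 + u)))))"
    by (rule C2_kernel_sqrt_affine) (use W in \<open>auto intro!: continuous_intros\<close>)
  have Cw: "C2_kernel U (\<lambda>h u. 4 * pi / E0 ^ n * (u ^ n * sqrt (1 - u))) (\<lambda>h u. 0) (\<lambda>h u. 0)"
           "C2_kernel U (\<lambda>h u. 4 * pi / (3 * E0 ^ n) * (u ^ n * ((1 - u) * sqrt (1 - u)))) (\<lambda>h u. 0) (\<lambda>h u. 0)"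
    by (intro C2_kernel_of_snd continuous_intros)+
  obtain K1 K2 where "C2_kernel U (rho_kernel n chi E0) K1 K2"
    unfolding rho_kernel_def[abs_def] power2_eq_square
    using C2_kernel_mult[OF C2_kernel_mult[OF C2_kernel_mult[OF C2_kernel_mult[OF Cm Cw(1)] Cchi]
          C2_kernel_mult[OF CL CL]] CS] by blast
  from C2_kernel_integral[OF this] show "\<exists>R1 R2. C2_on {-d<..<d} (\<lambda>h. integral {0..1} (rho_kernel n chi E0 h)) R1 R2"
    unfolding U_def by auto
  obtain K1 K2 where "C2_kernel U (pres_kernel n chi E0) K1 K2"
    unfolding pres_kernel_def[abs_def]
    using C2_kernel_mult[OF C2_kernel_mult[OF C2_kernel_mult[OF C2_kernel_mult[OF Cm Cw(2)] Cchi] CW] CS]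
    by blast
  from C2_kernel_integral[OF this] show "\<exists>P1 P2. C2_on {-d<..<d} (\<lambda>h. integral {0..1} (pres_kernel n chi E0 h)) P1 P2"
    unfolding U_def by auto
qed

lemma integral_kernels_at_0_pos:
  assumes "0 < E0" "chi 0 > 0"
  shows "integral {0..1} (rho_kernel n chi E0 0) > 0" "integral {0..1} (pres_kernel n chi E0 0) > 0"
proof -
  have pos: "integral {0..1} K > 0" if "continuous_on {0..1} K" "\<And>u. u \<in> {0<..<1} \<Longrightarrow> K u > 0" for K :: "real \<Rightarrow> real"
    using integral_less[of 0 1 "\<lambda>_. 0" K] that by simp
  show "integral {0..1} (rho_kernel n chi E0 0) > 0" "integral {0..1} (pres_kernel n chi E0 0) > 0"
    using assms
    by (intro pos; auto simp: rho_kernel_def pres_kernel_def intro!: continuous_intros)+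
qed

lemma integral_reflect_scale:
  fixes f :: "real \<Rightarrow> real"
  assumes "h > 0" "continuous_on {0..1} (\<lambda>u. f (c - h * u))"
  shows "integral {c - h..c} f = h * integral {0..1} (\<lambda>u. f (c - h * u))"
proof -
  define g where "g u = f (c - h * u)" for u
  have "(g has_integral integral {0..1} g) (cbox 0 1)"
    using integrable_continuous_real[OF assms(2)] unfolding g_def by (simp add: integrable_integral)
  from has_integral_affinity[OF this, of "- 1 / h" "c / h"] assms(1)
  have "((\<lambda>x. g (- 1 / h * x + c / h)) has_integral h * integral {0..1} g) ((\<lambda>x. - h * x + c) ` {0..1})"
    by (simp add: field_simps)
  moreover have "(\<lambda>x. - h * x + c) ` {0..1} = {c - h..c}"
    using assms(1) by (subst image_affinity_atLeastAtMost) auto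
  moreover have "g (- 1 / h * x + c / h) = f x" for x
    unfolding g_def using assms(1) by (simp add: field_simps)
  ultimately have "(f has_integral h * integral {0..1} g) {c - h..c}" by simp
  then show ?thesis unfolding g_def by (rule integral_unique)
qed

lemma powr_three_halves: "(x :: real) \<ge> 0 \<Longrightarrow> x powr (3 / 2) = x * sqrt x"
  using powr_add[of x 1 "1 / 2"] by (cases "x = 0") (auto simp: powr_half_sqrt)

lemma powr_half_integer: "(h :: real) > 0 \<Longrightarrow> h powr (real k + 1 / 2) = h ^ k * sqrt h"
  by (simp add: powr_add powr_realpow powr_half_sqrt)

lemma reflected_energy_ratio:
  fixes h E0 u :: real
  assumes "0 < h" "h < E0" "u \<in> {0..1}"
  shows "sqrt (((E0 - h * u) / (E0 - h))\<^sup>2 - 1) =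
           sqrt h * sqrt (1 - u) * sqrt (2 * E0 - h * (1 + u)) / (E0 - h)"
    and "(((E0 - h * u) / (E0 - h))\<^sup>2 - 1) powr (3 / 2) =
           h * sqrt h * ((1 - u) * sqrt (1 - u)) * ((2 * E0 - h * (1 + u)) * sqrt (2 * E0 - h * (1 + u))) /
           (E0 - h) ^ 3"
proof -
  have V: "E0 - h > 0" using assms by simp
  have "h * u \<le> h" using assms by (simp add: mult_left_le)
  moreover have "2 * E0 - h * (1 + u) = 2 * E0 - h - h * u" by (simp add: algebra_simps)
  ultimately have W: "2 * E0 - h * (1 + u) \<ge> 0"
    using assms by linarith
  have eq: "((E0 - h * u) / (E0 - h))\<^sup>2 - 1 = h * (1 - u) * (2 * E0 - h * (1 + u)) / (E0 - h)\<^sup>2"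
  proof -
    have "((E0 - h * u) / (E0 - h))\<^sup>2 - 1 = ((E0 - h * u)\<^sup>2 - (E0 - h)\<^sup>2) / (E0 - h)\<^sup>2"
      using V by (simp only: power_divide) (simp add: diff_divide_distrib)
    also have "(E0 - h * u)\<^sup>2 - (E0 - h)\<^sup>2 = h * (1 - u) * (2 * E0 - h * (1 + u))"
      by (simp add: power2_eq_square algebra_simps)
    finally show ?thesis .
  qed
  show sq: "sqrt (((E0 - h * u) / (E0 - h))\<^sup>2 - 1) =
           sqrt h * sqrt (1 - u) * sqrt (2 * E0 - h * (1 + u)) / (E0 - h)"
    unfolding eq using V by (simp add: real_sqrt_mult real_sqrt_divide)
  have nonneg: "((E0 - h * u) / (E0 - h))\<^sup>2 - 1 \<ge> 0"
    unfolding eq using assms W by auto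
  then show "(((E0 - h * u) / (E0 - h))\<^sup>2 - 1) powr (3 / 2) =
           h * sqrt h * ((1 - u) * sqrt (1 - u)) * ((2 * E0 - h * (1 + u)) * sqrt (2 * E0 - h * (1 + u))) /
           (E0 - h) ^ 3"
    unfolding powr_three_halves[OF nonneg] sq unfolding eq using V
    by (simp add: field_simps power2_eq_square power3_eq_cube)
qed

lemma
  fixes chi :: "real \<Rightarrow> real"
  assumes "0 < h" "h < E0" "continuous_on {0..h / E0} chi"
  shows continuous_on_rho_kernel: "continuous_on {0..1} (rho_kernel n chi E0 h)"
    and continuous_on_pres_kernel: "continuous_on {0..1} (pres_kernel n chi E0 h)"
proof -
  have img: "(\<lambda>u. h * u / E0) ` {0..1} \<subseteq> {0..h / E0}"
    using assms by (auto simp: divide_right_mono mult_left_le)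
  have "continuous_on {0..1} (\<lambda>u. chi (h * u / E0))"
    by (rule continuous_on_compose2[OF assms(3) _ img]) (use assms in \<open>auto intro!: continuous_intros\<close>)
  then show "continuous_on {0..1} (rho_kernel n chi E0 h)" "continuous_on {0..1} (pres_kernel n chi E0 h)"
    unfolding rho_kernel_def[abs_def] pres_kernel_def[abs_def] using assms by (auto intro!: continuous_intros)
qed

lemma phi_reflected:
  fixes phi chi :: "real \<Rightarrow> real"
  assumes "0 < h" "h < E0" "u \<in> {0..1}" "\<forall>x\<in>{0..h / E0}. phi x = x ^ n * chi x"
  shows "phi (1 - (E0 - h * u) / E0) = h ^ n / E0 ^ n * u ^ n * chi (h * u / E0)"
proof -
  have "E0 \<noteq> 0" using assms(1,2) by linarith
  then have "1 - (E0 - h * u) / E0 = h * u / E0" by (simp add: field_simps)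
  moreover have "h * u / E0 \<in> {0..h / E0}"
    using assms by (auto simp: divide_right_mono mult_left_le)
  ultimately show ?thesis
    using assms(4) by (simp add: power_mult_distrib power_divide)
qed

lemma rho_eq_powr_integral:
  assumes h: "0 < h" "h < E0" and phi: "\<forall>x\<in>{0..h / E0}. phi x = x ^ n * chi x"
    and chi: "continuous_on {0..h / E0} chi"
  shows "rho phi E0 (E0 - h) = h powr (real n + 3 / 2) * integral {0..1} (rho_kernel n chi E0 h)"
proof -
  define V where "V = E0 - h"
  have V: "V > 0" using h by (simp add: V_def)
  define f where "f E = phi (1 - E / E0) * E\<^sup>2 * sqrt ((E / V)\<^sup>2 - 1)" for E
  define c where "c = h ^ n * sqrt h * V ^ 3 / (4 * pi)"
  have f: "f (E0 - h * u) = c * rho_kernel n chi E0 h u" if "u \<in> {0..1}" for u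
    unfolding f_def V_def phi_reflected[OF h that phi] reflected_energy_ratio(1)[OF h that]
    unfolding V_def[symmetric] rho_kernel_def c_def
    using V h by (simp add: field_simps eval_nat_numeral)
  have "continuous_on {0..1} (\<lambda>u. c * rho_kernel n chi E0 h u)"
    using continuous_on_rho_kernel[OF h chi] by (intro continuous_intros)
  then have "continuous_on {0..1} (\<lambda>u. f (E0 - h * u))"
    by (rule continuous_on_eq) (use f in auto)
  moreover have "integral {0..1} (\<lambda>u. f (E0 - h * u)) = integral {0..1} (\<lambda>u. c * rho_kernel n chi E0 h u)"
    by (rule integral_cong) (rule f)
  ultimately have "integral {V..E0} f = h * (c * integral {0..1} (rho_kernel n chi E0 h))"
    using integral_reflect_scale[OF h(1)] by (simp add: V_def)
  then have "rho phi E0 (E0 - h) = 4 * pi / V ^ 3 * (h * (c * integral {0..1} (rho_kernel n chi E0 h)))"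
    by (simp add: rho_def f_def[abs_def] V_def)
  also have "\<dots> = h powr (real (n + 1) + 1 / 2) * integral {0..1} (rho_kernel n chi E0 h)"
    unfolding powr_half_integer[OF h(1)] using V by (simp add: c_def field_simps)
  finally show ?thesis by (simp add: add_ac)
qed

lemma pres_eq_powr_integral:
  assumes h: "0 < h" "h < E0" and phi: "\<forall>x\<in>{0..h / E0}. phi x = x ^ n * chi x"
    and chi: "continuous_on {0..h / E0} chi"
  shows "pres phi E0 (E0 - h) = h powr (real n + 3 / 2 + 1) * integral {0..1} (pres_kernel n chi E0 h)"
proof -
  define V where "V = E0 - h"
  have V: "V > 0" using h by (simp add: V_def)
  define f where "f E = phi (1 - E / E0) * ((E / V)\<^sup>2 - 1) powr (3 / 2)" for E
  define c where "c = 3 * h ^ (n + 1) * sqrt h * V / (4 * pi)"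
  have f: "f (E0 - h * u) = c * pres_kernel n chi E0 h u" if "u \<in> {0..1}" for u
    unfolding f_def V_def phi_reflected[OF h that phi] reflected_energy_ratio(2)[OF h that]
    unfolding V_def[symmetric] pres_kernel_def c_def
    using V h by (simp add: field_simps eval_nat_numeral)
  have "continuous_on {0..1} (\<lambda>u. c * pres_kernel n chi E0 h u)"
    using continuous_on_pres_kernel[OF h chi] by (intro continuous_intros)
  then have "continuous_on {0..1} (\<lambda>u. f (E0 - h * u))"
    by (rule continuous_on_eq) (use f in auto)
  moreover have "integral {0..1} (\<lambda>u. f (E0 - h * u)) = integral {0..1} (\<lambda>u. c * pres_kernel n chi E0 h u)"
    by (rule integral_cong) (rule f)
  ultimately have "integral {V..E0} f = h * (c * integral {0..1} (pres_kernel n chi E0 h))"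
    using integral_reflect_scale[OF h(1)] by (simp add: V_def)
  then have "pres phi E0 (E0 - h) = 4 * pi / (3 * V) * (h * (c * integral {0..1} (pres_kernel n chi E0 h)))"
    by (simp add: pres_def f_def[abs_def] V_def)
  also have "\<dots> = h powr (real (n + 2) + 1 / 2) * integral {0..1} (pres_kernel n chi E0 h)"
    unfolding powr_half_integer[OF h(1)] using V by (simp add: c_def field_simps)
  finally show ?thesis by (simp add: add_ac)
qed

lemma filterlim_at_bot_at_left_imp_nonpos:
  fixes f :: "real \<Rightarrow> real"
  assumes "filterlim f at_bot (at_left (c :: real))" "0 < c"
  shows "\<exists>V0. 0 < V0 \<and> V0 < c \<and> (\<forall>V\<in>{V0..<c}. f V \<le> 0)"
proof -
  have "\<forall>\<^sub>F V in at_left c. f V \<le> 0"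
    using assms(1) by (simp add: filterlim_at_bot)
  then obtain b where "b < c" "\<And>V. b < V \<Longrightarrow> V < c \<Longrightarrow> f V \<le> 0"
    unfolding eventually_at_left_field by blast
  then show ?thesis
    using assms(2) by (intro exI[of _ "(max b 0 + c) / 2"]) auto
qed

theorem mainTheorem2:
  fixes phi :: "real \<Rightarrow> real" and E0 :: real and n :: nat
  assumes "E0 > 0" and "admissible_phi phi n" and "n \<le> 3"
  shows "filterlim (Iind phi E0) at_bot (at_left E0) \<and>
         (\<exists>V0. 0 < V0 \<and> V0 < E0 \<and> (\<forall>V\<in>{V0..<E0}. Iind phi E0 V \<le> 0))"
proof -
  obtain r chi chi1 chi2 where r: "0 < r" "chi 0 > 0" and phi: "\<forall>x\<in>{0..<r}. phi x = x ^ n * chi x"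
    and chi: "C2_on {-r<..<r} chi chi1 chi2"
    using admissible_phi_factor[OF assms(2)] by blast
  define d where "d = min E0 (r * E0)"
  have d: "0 < d" "d \<le> E0" "d \<le> r * E0" using assms(1) r by (auto simp: d_def)
  obtain R1 R2 P1 P2
    where R: "C2_on {-d<..<d} (\<lambda>h. integral {0..1} (rho_kernel n chi E0 h)) R1 R2"
      and P: "C2_on {-d<..<d} (\<lambda>h. integral {0..1} (pres_kernel n chi E0 h)) P1 P2"
    using C2_on_kernel_integrals[OF assms(1) chi d] by blast
  have expand: "rho phi E0 (E0 - h) = h powr (real n + 3 / 2) * integral {0..1} (rho_kernel n chi E0 h) \<and>
      pres phi E0 (E0 - h) = h powr (real n + 3 / 2 + 1) * integral {0..1} (pres_kernel n chi E0 h)"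
    if "h \<in> {0<..<d}" for h
  proof -
    have h: "0 < h" "h < E0" "h / E0 < r" using that d assms(1) by (auto simp: field_simps)
    then have "\<forall>x\<in>{0..h / E0}. phi x = x ^ n * chi x" "continuous_on {0..h / E0} chi"
      using phi C2_on_imp_continuous_on[OF chi] by (auto intro: continuous_on_subset)
    then show ?thesis using rho_eq_powr_integral pres_eq_powr_integral h by blast
  qed
  have "integral {0..1} (rho_kernel n chi E0 0) > 0" "integral {0..1} (pres_kernel n chi E0 0) > 0"
    using integral_kernels_at_0_pos assms(1) r(2) by blast+
  then have "filterlim (Iind phi E0) at_bot (at_left E0)"
    unfolding Iind_eq_Iind_of
    by (intro Iind_of_tendsto_at_bot[OF _ _ d(1) R P _ _ expand]) (use assms(3) in auto)
  with filterlim_at_bot_at_left_imp_nonpos assms(1) show ?thesis by blast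
qed

end
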